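(* Let $P$ be a primitive monoid containing order-ideals $I,I'$ with $I\cap I'=0$, and let $\varphi\colon I\to I'$ be a monoid isomorphism. Let $Q$ be the crowned pushout of $(P,I,I',\varphi)$ with projection $\pi\colon P\to Q$. Then $Q$ is a primitive monoid, $\pi$ maps $\mathbb P(P)\setminus\mathbb P(I')$ bijectively onto $\mathbb P(Q)$, and under this identification the order on $\mathbb P(Q)$ is the one generated by the order of $\mathbb P(P)$ restricted to $\mathbb P(P)\setminus\mathbb P(I')$ together with the additional relations $p<q$ whenever $p\in\mathbb P(I)$, $q\in\mathbb P(P)\setminus(\mathbb P(I)\sqcup\mathbb P(I'))$ and $\varphi(p)<q$ in $\mathbb P(P)$. Moreover, a prime $p\in\mathbb P(Q)$ is free in $Q$ if and only if it is free in $P$.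
   Context: Monoids are abelian. Algebraic preorder: $x\le y$ iff $y=x+z$. A prime is $p$ with $p\not\le0$ and $p\le a+b\Rightarrow p\le a$ or $p\le b$; a primitive monoid is an antisymmetric ($\le$ a partial order), primely generated (every element a sum of primes) refinement monoid; $\mathbb P(M)$ denotes its set of primes ordered by the algebraic order, and for an order-ideal $S$, $\mathbb P(S)=\mathbb P(M)\cap S$. A prime $p$ is free if $p+p\ne p$. An order-ideal is a nonempty $I$ with $x+y\in I\iff x,y\in I$. The crowned pushout of $(P,I,I',\varphi)$ is the coequalizer, in the category of monoids, of the inclusion $I\to P$ and the composite $I\xrightarrow{\varphi}I'\hookrightarrow P$. *)

theory Defs
  imports Main
begin

definition alg_le :: "'a::comm_monoid_add \<Rightarrow> 'a \<Rightarrow> bool" where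
  "alg_le x y \<longleftrightarrow> (\<exists>z. y = x + z)"

definition alg_less :: "'a::comm_monoid_add \<Rightarrow> 'a \<Rightarrow> bool" where
  "alg_less x y \<longleftrightarrow> alg_le x y \<and> x \<noteq> y"

definition is_prime_elem :: "'a::comm_monoid_add \<Rightarrow> bool" where
  "is_prime_elem p \<longleftrightarrow> \<not> alg_le p 0 \<and>
     (\<forall>a b. alg_le p (a + b) \<longrightarrow> alg_le p a \<or> alg_le p b)"

definition primes_of :: "'a::comm_monoid_add set" where
  "primes_of = {p. is_prime_elem p}"

definition free_prime :: "'a::comm_monoid_add \<Rightarrow> bool" where
  "free_prime p \<longleftrightarrow> p + p \<noteq> p"

definition refinement_monoid :: "'a::comm_monoid_add itself \<Rightarrow> bool" where
  "refinement_monoid _ \<longleftrightarrow> (\<forall>a b c d :: 'a. a + b = c + d \<longrightarrow>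
     (\<exists>z11 z12 z21 z22. a = z11 + z12 \<and> b = z21 + z22 \<and> c = z11 + z21 \<and> d = z12 + z22))"

definition antisymmetric_monoid :: "'a::comm_monoid_add itself \<Rightarrow> bool" where
  "antisymmetric_monoid _ \<longleftrightarrow> (\<forall>x y :: 'a. alg_le x y \<and> alg_le y x \<longrightarrow> x = y)"

definition primely_generated :: "'a::comm_monoid_add itself \<Rightarrow> bool" where
  "primely_generated _ \<longleftrightarrow> (\<forall>x :: 'a. \<exists>xs. set xs \<subseteq> primes_of \<and> x = sum_list xs)"

definition primitive_monoid :: "'a::comm_monoid_add itself \<Rightarrow> bool" where
  "primitive_monoid T \<longleftrightarrow> antisymmetric_monoid T \<and> primely_generated T \<and> refinement_monoid T"

definition order_ideal :: "'a::comm_monoid_add set \<Rightarrow> bool" where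
  "order_ideal I \<longleftrightarrow> I \<noteq> {} \<and> (\<forall>x y. x + y \<in> I \<longleftrightarrow> x \<in> I \<and> y \<in> I)"

definition monoid_hom :: "('a::comm_monoid_add \<Rightarrow> 'b::comm_monoid_add) \<Rightarrow> bool" where
  "monoid_hom f \<longleftrightarrow> f 0 = 0 \<and> (\<forall>x y. f (x + y) = f x + f y)"

definition monoid_iso_on :: "('a::comm_monoid_add \<Rightarrow> 'a) \<Rightarrow> 'a set \<Rightarrow> 'a set \<Rightarrow> bool" where
  "monoid_iso_on f I J \<longleftrightarrow> bij_betw f I J \<and> f 0 = 0 \<and>
     (\<forall>x\<in>I. \<forall>y\<in>I. f (x + y) = f x + f y)"

text \<open>The monoid congruence on P generated by the pairs (x, phi x), x in I.
  The coequalizer (in monoids) of the inclusion I -> P and I -> I' -> P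
  is the quotient of P by this congruence.\<close>
inductive_set crown_cong :: "'a::comm_monoid_add set \<Rightarrow> ('a \<Rightarrow> 'a) \<Rightarrow> ('a \<times> 'a) set"
  for I :: "'a set" and \<phi> :: "'a \<Rightarrow> 'a" where
  gen: "x \<in> I \<Longrightarrow> (x, \<phi> x) \<in> crown_cong I \<phi>"
| refl: "(x, x) \<in> crown_cong I \<phi>"
| sym: "(x, y) \<in> crown_cong I \<phi> \<Longrightarrow> (y, x) \<in> crown_cong I \<phi>"
| trans: "(x, y) \<in> crown_cong I \<phi> \<Longrightarrow> (y, z) \<in> crown_cong I \<phi> \<Longrightarrow> (x, z) \<in> crown_cong I \<phi>"
| add: "(x, y) \<in> crown_cong I \<phi> \<Longrightarrow> (x + z, y + z) \<in> crown_cong I \<phi>"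

text \<open>pi : P -> Q is (the projection of) the crowned pushout of (P, I, I', phi):
  a surjective monoid homomorphism whose kernel congruence is exactly crown_cong.\<close>
definition crowned_pushout :: "'a::comm_monoid_add set \<Rightarrow> ('a \<Rightarrow> 'a) \<Rightarrow> ('a \<Rightarrow> 'b::comm_monoid_add) \<Rightarrow> bool" where
  "crowned_pushout I \<phi> \<pi> \<longleftrightarrow> monoid_hom \<pi> \<and> surj \<pi> \<and>
     (\<forall>x y. \<pi> x = \<pi> y \<longleftrightarrow> (x, y) \<in> crown_cong I \<phi>)"

end

theory Submission
  imports Defs
begin

text \<open>
  The proof
  studies functions on \<open>P\<close> that are invariant under this congruence: by
  \<open>crown_cong_invariant\<close> it suffices that they identify \<open>x\<close> with \<open>\<phi> x\<close> and respect
  translation.  Two such invariants drive the argument: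
  \<^item> \<open>reaches p a\<close> (\<open>p \<le> a\<close>, or \<open>p \<in> I\<close> and \<open>\<phi> p \<le> a\<close>) describes \<open>\<pi> p \<le> \<pi> a\<close> for primes
    \<open>p \<notin> I'\<close>; it shows that \<open>\<pi> p\<close> is prime, computes the order of \<open>\<bbbP>(Q)\<close> and gives
    injectivity of \<open>\<pi>\<close> on \<open>\<bbbP>(P) - I'\<close>;
  \<^item> \<open>dominates S n a\<close> (a sum of \<open>n\<close> elements of \<open>S\<close> lies below \<open>a\<close>), for
    \<open>S = {p, \<phi> p}\<close>, is additive because \<open>P\<close> is a refinement monoid.  Unbounded counts force
    a prime strictly above \<open>p\<close> or \<open>\<phi> p\<close>, which absorbs it; this yields the cancellation law
    behind antisymmetry of \<open>Q\<close>, and shows that free primes stay free.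
  Refinement of \<open>Q\<close> comes from a normal form of the congruence, and prime generation of \<open>Q\<close>
  from that of \<open>P\<close>.
\<close>

lemma alg_le_refl [simp]: "alg_le x x"
  unfolding alg_le_def by (metis add_0_right)

lemma alg_le_0 [simp]: "alg_le 0 x"
  unfolding alg_le_def by simp

lemma alg_le_trans: "alg_le x y \<Longrightarrow> alg_le y z \<Longrightarrow> alg_le x z"
  unfolding alg_le_def by (metis add.assoc)

lemma alg_le_add_right [simp]: "alg_le x (x + y)"
  unfolding alg_le_def by blast

lemma alg_le_add_left [simp]: "alg_le x (y + x)"
  unfolding alg_le_def by (metis add.commute)

lemma alg_le_add_mono: "alg_le a b \<Longrightarrow> alg_le c d \<Longrightarrow> alg_le (a + c) (b + d)"
  unfolding alg_le_def by (metis add.assoc add.commute)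

lemma alg_le_hom: "monoid_hom f \<Longrightarrow> alg_le a b \<Longrightarrow> alg_le (f a) (f b)"
  unfolding alg_le_def monoid_hom_def by metis

lemma alg_le_sum_list: "x \<in> set xs \<Longrightarrow> alg_le x (sum_list xs)"
  by (induction xs) (auto intro: alg_le_trans[OF _ alg_le_add_left])

lemma monoid_hom_sum_list: "monoid_hom f \<Longrightarrow> f (sum_list xs) = sum_list (map f xs)"
  by (induction xs) (auto simp: monoid_hom_def)

lemma prime_le_sum_list:
  assumes "is_prime_elem p" and "alg_le p (sum_list xs)"
  shows "\<exists>x\<in>set xs. alg_le p x"
  using assms(2)
proof (induction xs)
  case Nil
  then show ?case using assms(1) by (simp add: is_prime_elem_def)
next
  case (Cons a xs)
  then show ?case using assms(1) unfolding is_prime_elem_def by auto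
qed

lemma order_ideal_add_iff: "order_ideal J \<Longrightarrow> x + y \<in> J \<longleftrightarrow> x \<in> J \<and> y \<in> J"
  unfolding order_ideal_def by blast

lemma order_ideal_downward: "order_ideal J \<Longrightarrow> alg_le a b \<Longrightarrow> b \<in> J \<Longrightarrow> a \<in> J"
  unfolding order_ideal_def alg_le_def by blast

lemma order_ideal_zero: "order_ideal J \<Longrightarrow> 0 \<in> J"
  unfolding order_ideal_def by (metis add_0_right all_not_in_conv)

lemma order_ideal_sum_list: "order_ideal J \<Longrightarrow> set xs \<subseteq> J \<Longrightarrow> sum_list xs \<in> J"
  by (induction xs) (simp_all add: order_ideal_zero order_ideal_add_iff)

lemma iso_le:
  assumes iso: "monoid_iso_on f J J'" and J: "order_ideal J" and J': "order_ideal J'"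
    and x: "x \<in> J" and y: "y \<in> J"
  shows "alg_le (f x) (f y) \<longleftrightarrow> alg_le x y"
proof
  assume "alg_le (f x) (f y)"
  then obtain w where w: "f y = f x + w" unfolding alg_le_def by blast
  have "f y \<in> J'" using iso y unfolding monoid_iso_on_def bij_betw_def by blast
  then have "w \<in> J'" using w by (metis alg_le_add_left order_ideal_downward[OF J'])
  then obtain z where z: "z \<in> J" "w = f z" using iso unfolding monoid_iso_on_def bij_betw_def by blast
  then have "f y = f (x + z)" using iso x w unfolding monoid_iso_on_def by simp
  moreover have "x + z \<in> J" using order_ideal_add_iff[OF J] x z by simp
  ultimately have "y = x + z" using iso y unfolding monoid_iso_on_def bij_betw_def inj_on_def by blast
  then show "alg_le x y" by simp
next
  assume "alg_le x y"
  then obtain z where z: "y = x + z" unfolding alg_le_def by blast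
  then have "z \<in> J" using order_ideal_add_iff[OF J] y by simp
  then show "alg_le (f x) (f y)" using iso x z unfolding monoid_iso_on_def by simp
qed

lemma iso_sum_list:
  assumes "monoid_iso_on f J J'" and "order_ideal J" and "set xs \<subseteq> J"
  shows "f (sum_list xs) = sum_list (map f xs)"
  using assms(3)
proof (induction xs)
  case Nil
  then show ?case using assms(1) unfolding monoid_iso_on_def by simp
next
  case (Cons x xs)
  then show ?case using assms(1) order_ideal_sum_list[OF assms(2)]
    unfolding monoid_iso_on_def by simp
qed

lemma iso_free:
  assumes "monoid_iso_on f J J'" and "order_ideal J" and "p \<in> J" and "free_prime p"
  shows "free_prime (f p)"
  using assms order_ideal_add_iff[OF assms(2), of p p]
  unfolding monoid_iso_on_def free_prime_def bij_betw_def inj_on_def by metis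

lemma iso_inverse:
  assumes iso: "monoid_iso_on f J J'" and J: "order_ideal J"
  shows "monoid_iso_on (inv_into J f) J' J"
proof -
  let ?g = "inv_into J f"
  have bij: "bij_betw f J J'" and inj: "inj_on f J"
    using iso unfolding monoid_iso_on_def bij_betw_def by auto
  have gJ: "?g u \<in> J" and fg: "f (?g u) = u" if "u \<in> J'" for u
    using that bij by (auto simp: bij_betw_def inv_into_into f_inv_into_f)
  have "?g 0 = 0"
    using inv_into_f_f[OF inj order_ideal_zero[OF J]] iso unfolding monoid_iso_on_def by simp
  moreover have "?g (u + v) = ?g u + ?g v" if "u \<in> J'" "v \<in> J'" for u v
  proof -
    have "?g u + ?g v \<in> J" using gJ that order_ideal_add_iff[OF J] by blast
    moreover have "f (?g u + ?g v) = u + v" using iso gJ fg that unfolding monoid_iso_on_def by simp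
    ultimately show ?thesis using inv_into_f_f[OF inj] by metis
  qed
  ultimately show ?thesis unfolding monoid_iso_on_def using bij_betw_inv_into[OF bij] by blast
qed

lemma crown_cong_invariant:
  assumes gen: "\<And>x. x \<in> I \<Longrightarrow> F x = F (\<phi> x)"
    and add: "\<And>x y z. F x = F y \<Longrightarrow> F (x + z) = F (y + z)"
    and "(a, b) \<in> crown_cong I \<phi>"
  shows "F a = F b"
  using assms(3)
proof (induction rule: crown_cong.induct)
  case (gen x)
  then show ?case by (rule assms(1))
next
  case (add x y z)
  then show ?case using assms(2) by blast
qed simp_all

section \<open>Counting elements of a set below an element\<close>

text \<open>For a set \<open>S\<close> of primes this is additive in \<open>a\<close>, so it yields invariants of
  congruences; it is the tool for proving cancellation in the crowned pushout.\<close>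
definition dominates :: "'a::comm_monoid_add set \<Rightarrow> nat \<Rightarrow> 'a \<Rightarrow> bool" where
  "dominates S n a \<longleftrightarrow> (\<exists>ys. set ys \<subseteq> S \<and> length ys = n \<and> alg_le (sum_list ys) a)"

lemma dominates_0 [simp]: "dominates S 0 a"
  unfolding dominates_def by simp

lemma dominates_add_intro:
  assumes "dominates S m a" and "dominates S n b"
  shows "dominates S (m + n) (a + b)"
proof -
  obtain ys zs where "set ys \<subseteq> S" "length ys = m" "alg_le (sum_list ys) a"
    "set zs \<subseteq> S" "length zs = n" "alg_le (sum_list zs) b"
    using assms unfolding dominates_def by blast
  then show ?thesis unfolding dominates_def
    by (intro exI[of _ "ys @ zs"]) (simp add: alg_le_add_mono)
qed

lemma dominates_drop:
  assumes "\<not> alg_le s a"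
  shows "dominates (insert s S) n a \<longleftrightarrow> dominates S n a"
proof
  assume "dominates (insert s S) n a"
  then obtain ys where ys: "set ys \<subseteq> insert s S" "length ys = n" "alg_le (sum_list ys) a"
    unfolding dominates_def by blast
  have "s \<notin> set ys" using assms ys(3) alg_le_sum_list alg_le_trans by blast
  then show "dominates S n a" using ys unfolding dominates_def by blast
qed (auto simp: dominates_def)

lemma dominates_none:
  assumes "\<And>s. s \<in> S \<Longrightarrow> \<not> alg_le s a" and "dominates S n a"
  shows "n = 0"
proof (rule ccontr)
  assume "n \<noteq> 0"
  then obtain ys where ys: "set ys \<subseteq> S" "ys \<noteq> []" "alg_le (sum_list ys) a"
    using assms(2) unfolding dominates_def by fastforce
  then have "alg_le (hd ys) a" using alg_le_sum_list alg_le_trans hd_in_set by blast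
  then show False using assms(1) ys(1,2) hd_in_set by blast
qed

lemma dominates_two:
  assumes "dominates S (Suc (Suc n)) a"
  shows "\<exists>u\<in>S. \<exists>v\<in>S. alg_le (u + v) a"
proof -
  obtain ys where ys: "set ys \<subseteq> S" "length ys = Suc (Suc n)" "alg_le (sum_list ys) a"
    using assms unfolding dominates_def by blast
  then obtain u v zs where "ys = u # v # zs" by (metis length_Suc_conv)
  then have "u \<in> S" "v \<in> S" "sum_list ys = (u + v) + sum_list zs"
    using ys(1) by (auto simp: add.assoc)
  moreover from this(3) have "alg_le (u + v) (sum_list ys)" by simp
  ultimately show ?thesis using ys(3) alg_le_trans by blast
qed

lemma dominates_iso:
  assumes iso: "monoid_iso_on f J J'" and J: "order_ideal J" and J': "order_ideal J'"
    and S: "S \<subseteq> J" and x: "x \<in> J" and dom: "dominates S n x"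
  shows "dominates (f ` S) n (f x)"
proof -
  obtain ys where ys: "set ys \<subseteq> S" "length ys = n" "alg_le (sum_list ys) x"
    using dom unfolding dominates_def by blast
  have "sum_list ys \<in> J" using order_ideal_downward[OF J ys(3) x] .
  then have "alg_le (f (sum_list ys)) (f x)" using iso_le[OF iso J J' _ x] ys(3) by blast
  then have "alg_le (sum_list (map f ys)) (f x)" using iso_sum_list[OF iso J] ys(1) S by simp
  then show ?thesis unfolding dominates_def using ys by (intro exI[of _ "map f ys"]) auto
qed

section \<open>Refinement monoids\<close>

locale refinement =
  assumes refinement: "refinement_monoid TYPE('a::comm_monoid_add)"
begin

lemma refine:
  "(a::'a) + b = c + d \<Longrightarrow>
    \<exists>z11 z12 z21 z22. a = z11 + z12 \<and> b = z21 + z22 \<and> c = z11 + z21 \<and> d = z12 + z22"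
  using refinement unfolding refinement_monoid_def by blast

lemma riesz_decomposition:
  assumes "alg_le (x::'a) (a + b)"
  shows "\<exists>x1 x2. x = x1 + x2 \<and> alg_le x1 a \<and> alg_le x2 b"
proof -
  obtain z where "a + b = x + z" using assms unfolding alg_le_def by blast
  from refine[OF this] obtain z11 z12 z21 z22 where
    "a = z11 + z12" "b = z21 + z22" "x = z11 + z21" by blast
  then have "x = z11 + z21 \<and> alg_le z11 a \<and> alg_le z21 b" by simp
  then show ?thesis by blast
qed

text \<open>Refinement of a two-term sum against a three-term sum, and of three against three;
  needed to compose normal forms of the crown congruence.\<close>
lemma refine23:
  assumes "(a1::'a) + a2 = b1 + b2 + b3"
  shows "\<exists>c11 c12 c13 c21 c22 c23. a1 = c11 + c12 + c13 \<and> a2 = c21 + c22 + c23 \<and>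
    b1 = c11 + c21 \<and> b2 = c12 + c22 \<and> b3 = c13 + c23"
proof -
  have "a1 + a2 = b1 + (b2 + b3)" using assms by (simp add: add.assoc)
  from refine[OF this] obtain d11 d12 d21 d22 where
    d: "a1 = d11 + d12" "a2 = d21 + d22" "b1 = d11 + d21" "b2 + b3 = d12 + d22" by blast
  from refine[OF d(4)] obtain e11 e12 e21 e22 where
    e: "b2 = e11 + e12" "b3 = e21 + e22" "d12 = e11 + e21" "d22 = e12 + e22" by blast
  have "a1 = d11 + e11 + e21" "a2 = d21 + e12 + e22" unfolding d(1,2) e(3,4) by (simp_all add: add.assoc)
  then show ?thesis using d(3) e(1,2) by blast
qed

lemma refine33:
  assumes "(a1::'a) + a2 + a3 = b1 + b2 + b3"
  shows "\<exists>z11 z12 z13 z21 z22 z23 z31 z32 z33.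
    a1 = z11 + z12 + z13 \<and> a2 = z21 + z22 + z23 \<and> a3 = z31 + z32 + z33 \<and>
    b1 = z11 + z21 + z31 \<and> b2 = z12 + z22 + z32 \<and> b3 = z13 + z23 + z33"
proof -
  have "a1 + (a2 + a3) = b1 + b2 + b3" using assms by (simp add: add.assoc)
  from refine23[OF this] obtain c11 c12 c13 c21 c22 c23 where
    c: "a1 = c11 + c12 + c13" "a2 + a3 = c21 + c22 + c23"
      "b1 = c11 + c21" "b2 = c12 + c22" "b3 = c13 + c23" by blast
  from refine23[OF c(2)] obtain f11 f12 f13 f21 f22 f23 where
    f: "a2 = f11 + f12 + f13" "a3 = f21 + f22 + f23"
      "c21 = f11 + f21" "c22 = f12 + f22" "c23 = f13 + f23" by blast
  have "b1 = c11 + f11 + f21" "b2 = c12 + f12 + f22" "b3 = c13 + f13 + f23"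
    unfolding c(3,4,5) f(3,4,5) by (simp_all add: add.assoc)
  then show ?thesis using c(1) f(1,2) by blast
qed

lemma iso_prime:
  fixes f :: "'a \<Rightarrow> 'a"
  assumes iso: "monoid_iso_on f J J'" and J: "order_ideal J" and J': "order_ideal J'"
    and p: "p \<in> J" and prime: "is_prime_elem p"
  shows "is_prime_elem (f p)"
  unfolding is_prime_elem_def
proof (intro conjI allI impI)
  show "\<not> alg_le (f p) 0"
  proof
    assume "alg_le (f p) 0"
    moreover have "f 0 = 0" using iso unfolding monoid_iso_on_def by simp
    ultimately have "alg_le p 0" using iso_le[OF iso J J' p order_ideal_zero[OF J]] by simp
    then show False using prime unfolding is_prime_elem_def by simp
  qed
next
  let ?g = "inv_into J f"
  have g: "monoid_iso_on ?g J' J" using iso_inverse[OF iso J] .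
  have gJ: "?g u \<in> J" and fg: "f (?g u) = u" if "u \<in> J'" for u
    using that iso by (auto simp: monoid_iso_on_def bij_betw_def inv_into_into f_inv_into_f)
  fix a b assume "alg_le (f p) (a + b)"
  from riesz_decomposition[OF this] obtain x1 x2 where
    x: "f p = x1 + x2" "alg_le x1 a" "alg_le x2 b" by blast
  have fp: "f p \<in> J'" using iso p unfolding monoid_iso_on_def bij_betw_def by blast
  then have xJ': "x1 \<in> J'" "x2 \<in> J'" using x(1) order_ideal_add_iff[OF J'] by auto
  have "?g (f p) = p" using iso p by (simp add: monoid_iso_on_def bij_betw_def inv_into_f_f)
  then have "p = ?g x1 + ?g x2" using x(1) g xJ' unfolding monoid_iso_on_def by simp
  then have "alg_le p (?g x1) \<or> alg_le p (?g x2)" using prime unfolding is_prime_elem_def by simp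
  then have "alg_le (f p) x1 \<or> alg_le (f p) x2"
    using iso_le[OF iso J J' p gJ[OF xJ'(1)]] iso_le[OF iso J J' p gJ[OF xJ'(2)]] fg xJ' by simp
  then show "alg_le (f p) a \<or> alg_le (f p) b" using x alg_le_trans by blast
qed

lemma split_prime_list:
  assumes "set ys \<subseteq> primes_of" and "alg_le (sum_list ys) ((a::'a) + b)"
  shows "\<exists>ys1 ys2. set ys1 \<subseteq> set ys \<and> set ys2 \<subseteq> set ys \<and>
    length ys1 + length ys2 = length ys \<and> alg_le (sum_list ys1) a \<and> alg_le (sum_list ys2) b"
  using assms
proof (induction ys arbitrary: a b)
  case Nil
  then show ?case by (intro exI[of _ "[]"]) simp
next
  case (Cons y ys)
  from riesz_decomposition[OF Cons.prems(2)[simplified]] obtain x1 x2 where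
    x: "y + sum_list ys = x1 + x2" "alg_le x1 a" "alg_le x2 b" by blast
  from refine[OF x(1)] obtain e11 e12 e21 e22 where
    e: "y = e11 + e12" "sum_list ys = e21 + e22" "x1 = e11 + e21" "x2 = e12 + e22" by blast
  from Cons.IH[of e21 e22] Cons.prems(1) e(2) obtain ys1 ys2 where
    ys: "set ys1 \<subseteq> set ys" "set ys2 \<subseteq> set ys" "length ys1 + length ys2 = length ys"
      "alg_le (sum_list ys1) e21" "alg_le (sum_list ys2) e22" by auto
  have la: "alg_le x1 a" and lb: "alg_le x2 b" using x by auto
  have "is_prime_elem y" using Cons.prems(1) by (simp add: primes_of_def)
  then have "alg_le y e11 \<or> alg_le y e12" using e(1) unfolding is_prime_elem_def by simp
  then show ?case
  proof
    assume "alg_le y e11"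
    have "alg_le (y + sum_list ys1) x1" unfolding e(3) by (rule alg_le_add_mono) fact+
    moreover have "alg_le (sum_list ys2) x2" unfolding e(4) by (rule alg_le_trans[OF ys(5)]) simp
    ultimately have sums: "alg_le (sum_list (y # ys1)) a" "alg_le (sum_list ys2) b"
      by (auto intro: alg_le_trans[OF _ la] alg_le_trans[OF _ lb])
    show ?thesis by (rule exI[of _ "y # ys1"], rule exI[of _ ys2]) (use ys(1-3) sums in auto)
  next
    assume "alg_le y e12"
    have "alg_le (y + sum_list ys2) x2" unfolding e(4) by (rule alg_le_add_mono) fact+
    moreover have "alg_le (sum_list ys1) x1" unfolding e(3) by (rule alg_le_trans[OF ys(4)]) simp
    ultimately have sums: "alg_le (sum_list ys1) a" "alg_le (sum_list (y # ys2)) b"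
      by (auto intro: alg_le_trans[OF _ la] alg_le_trans[OF _ lb])
    show ?thesis by (rule exI[of _ ys1], rule exI[of _ "y # ys2"]) (use ys(1-3) sums in auto)
  qed
qed

lemma dominates_add:
  assumes "S \<subseteq> primes_of"
  shows "dominates S n ((a::'a) + b) \<longleftrightarrow> (\<exists>n1 n2. n = n1 + n2 \<and> dominates S n1 a \<and> dominates S n2 b)"
proof
  assume "dominates S n (a + b)"
  then obtain ys where ys: "set ys \<subseteq> S" "length ys = n" "alg_le (sum_list ys) (a + b)"
    unfolding dominates_def by blast
  from split_prime_list[OF _ ys(3)] ys(1) assms obtain ys1 ys2 where
    split: "set ys1 \<subseteq> set ys" "set ys2 \<subseteq> set ys" "length ys1 + length ys2 = length ys"
      "alg_le (sum_list ys1) a" "alg_le (sum_list ys2) b" by blast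
  have "dominates S (length ys1) a" "dominates S (length ys2) b"
    using split ys(1) unfolding dominates_def by blast+
  then show "\<exists>n1 n2. n = n1 + n2 \<and> dominates S n1 a \<and> dominates S n2 b"
    using split(3) ys(2) by metis
next
  assume "\<exists>n1 n2. n = n1 + n2 \<and> dominates S n1 a \<and> dominates S n2 b"
  then show "dominates S n (a + b)" using dominates_add_intro by blast
qed

end

section \<open>Primitive monoids\<close>

definition alg_antichain :: "'a::comm_monoid_add set \<Rightarrow> bool" where
  "alg_antichain S \<longleftrightarrow> (\<forall>u\<in>S. \<forall>v\<in>S. alg_le u v \<longrightarrow> u = v)"

locale primitive = refinement +
  assumes antisymmetric: "antisymmetric_monoid TYPE('a::comm_monoid_add)"
    and primely_generated: "primely_generated TYPE('a)"
begin

lemma alg_antisym: "alg_le x y \<Longrightarrow> alg_le y x \<Longrightarrow> x = (y::'a)"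
  using antisymmetric unfolding antisymmetric_monoid_def by blast

lemma prime_decomposition:
  obtains xs where "set xs \<subseteq> primes_of" and "(x::'a) = sum_list xs"
  using primely_generated unfolding primely_generated_def by blast

lemma absorb_below_prime:
  assumes "alg_less p r" and "is_prime_elem (r::'a)"
  shows "p + r = r"
proof -
  obtain z where r: "r = p + z" using assms(1) unfolding alg_less_def alg_le_def by blast
  have "\<not> alg_le r p" using assms(1) alg_antisym unfolding alg_less_def by blast
  then have "alg_le r z" using assms(2) r unfolding is_prime_elem_def by (metis alg_le_refl)
  then have "z = r" using alg_antisym r by simp
  then show ?thesis using r by simp
qed

lemma dominates_free_le_one:
  assumes S: "alg_antichain S" and y: "y \<in> S" "free_prime (y::'a)" and dom: "dominates S n y"
  shows "n \<le> 1"
proof (rule ccontr)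
  assume "\<not> n \<le> 1"
  then have "n = Suc (Suc (n - 2))" by simp
  then obtain u v where uv: "u \<in> S" "v \<in> S" "alg_le (u + v) y" using dominates_two dom by metis
  have "alg_le u y" "alg_le v y" using uv(3) alg_le_trans alg_le_add_right alg_le_add_left by blast+
  then have "u = y" "v = y" using S y(1) uv(1,2) unfolding alg_antichain_def by blast+
  then have "y + y = y" using uv(3) alg_antisym by simp
  then show False using y(2) unfolding free_prime_def by simp
qed

lemma dominates_bound:
  assumes S: "S \<subseteq> primes_of" "alg_antichain S" "\<And>s. s \<in> S \<Longrightarrow> free_prime s"
    and c: "\<And>s. s \<in> S \<Longrightarrow> \<not> alg_le s (c::'a)"
    and ys: "set ys \<subseteq> S" and dom: "dominates S n (sum_list ys + c)"
  shows "n \<le> length ys"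
  using ys dom
proof (induction ys arbitrary: n)
  case Nil
  then show ?case using dominates_none[OF c] by simp
next
  case (Cons y ys)
  have "dominates S n (y + (sum_list ys + c))" using Cons.prems(2) by (simp add: add.assoc)
  then obtain n1 n2 where n: "n = n1 + n2" "dominates S n1 y" "dominates S n2 (sum_list ys + c)"
    using dominates_add[OF S(1)] by blast
  have "n1 \<le> 1" using dominates_free_le_one[OF S(2) _ _ n(2)] Cons.prems(1) S(3) by simp
  moreover have "n2 \<le> length ys" using Cons.IH[OF _ n(3)] Cons.prems(1) by simp
  ultimately show ?case using n(1) by simp
qed

lemma prime_above_antichain:
  assumes S: "S \<subseteq> primes_of" "alg_antichain S" "\<And>s. s \<in> S \<Longrightarrow> free_prime s"
    and all: "\<And>n. dominates S n (x::'a)"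
  shows "\<exists>r s. is_prime_elem r \<and> alg_le r x \<and> s \<in> S \<and> alg_less s r"
proof (rule ccontr)
  assume none: "\<not> ?thesis"
  obtain rs where rs: "set rs \<subseteq> primes_of" "x = sum_list rs" using prime_decomposition .
  define ys where "ys = filter (\<lambda>r. r \<in> S) rs"
  define zs where "zs = filter (\<lambda>r. r \<notin> S) rs"
  have x: "x = sum_list ys + sum_list zs"
    unfolding rs(2) ys_def zs_def by (induction rs) (simp_all add: add_ac)
  have zs_small: "\<not> alg_le s (sum_list zs)" if s: "s \<in> S" for s
  proof
    assume "alg_le s (sum_list zs)"
    moreover have "is_prime_elem s" using S(1) s by (auto simp: primes_of_def)
    ultimately obtain z where z: "z \<in> set zs" "alg_le s z" using prime_le_sum_list by blast
    have "z \<in> set rs" "z \<notin> S" using z(1) unfolding zs_def by auto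
    then have "is_prime_elem z" "alg_le z x" using rs alg_le_sum_list by (auto simp: primes_of_def)
    moreover have "alg_less s z" using z(2) s \<open>z \<notin> S\<close> unfolding alg_less_def by auto
    ultimately show False using none s by blast
  qed
  have "set ys \<subseteq> S" unfolding ys_def by auto
  from dominates_bound[OF S zs_small this] have "Suc (length ys) \<le> length ys"
    using all[of "Suc (length ys)"] x by blast
  then show False by simp
qed

end

section \<open>The crowned pushout\<close>

locale crown = primitive +
  fixes I I' :: "'a::comm_monoid_add set" and \<phi> :: "'a \<Rightarrow> 'a" and \<pi> :: "'a \<Rightarrow> 'b::comm_monoid_add"
  assumes ideal_I: "order_ideal I" and ideal_I': "order_ideal I'"
    and disjoint: "I \<inter> I' = {0}"
    and iso: "monoid_iso_on \<phi> I I'"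
    and pushout: "crowned_pushout I \<phi> \<pi>"
begin

lemma downward_I: "alg_le a b \<Longrightarrow> b \<in> I \<Longrightarrow> a \<in> I"
  using order_ideal_downward[OF ideal_I] .

lemma downward_I': "alg_le a b \<Longrightarrow> b \<in> I' \<Longrightarrow> a \<in> I'"
  using order_ideal_downward[OF ideal_I'] .

lemma phi_in: "x \<in> I \<Longrightarrow> \<phi> x \<in> I'"
  using iso unfolding monoid_iso_on_def bij_betw_def by blast

lemma phi_add: "x \<in> I \<Longrightarrow> y \<in> I \<Longrightarrow> \<phi> (x + y) = \<phi> x + \<phi> y"
  using iso unfolding monoid_iso_on_def by blast

lemma phi_zero [simp]: "\<phi> 0 = 0"
  using iso unfolding monoid_iso_on_def by blast

definition \<psi> :: "'a \<Rightarrow> 'a" where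
  "\<psi> = inv_into I \<phi>"

lemma psi_iso: "monoid_iso_on \<psi> I' I"
  unfolding \<psi>_def using iso_inverse[OF iso ideal_I] .

lemma psi_in: "y \<in> I' \<Longrightarrow> \<psi> y \<in> I"
  using psi_iso unfolding monoid_iso_on_def bij_betw_def by blast

lemma psi_add: "x \<in> I' \<Longrightarrow> y \<in> I' \<Longrightarrow> \<psi> (x + y) = \<psi> x + \<psi> y"
  using psi_iso unfolding monoid_iso_on_def by blast

lemma phi_psi: "y \<in> I' \<Longrightarrow> \<phi> (\<psi> y) = y"
  unfolding \<psi>_def using iso by (simp add: monoid_iso_on_def bij_betw_def f_inv_into_f)

lemma psi_phi: "x \<in> I \<Longrightarrow> \<psi> (\<phi> x) = x"
  unfolding \<psi>_def using iso by (simp add: monoid_iso_on_def bij_betw_def inv_into_f_f)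

lemma phi_le_iff: "x \<in> I \<Longrightarrow> y \<in> I \<Longrightarrow> alg_le (\<phi> x) (\<phi> y) \<longleftrightarrow> alg_le x y"
  using iso_le[OF iso ideal_I ideal_I'] .

lemma phi_prime: "p \<in> I \<Longrightarrow> is_prime_elem p \<Longrightarrow> is_prime_elem (\<phi> p)"
  using iso_prime[OF iso ideal_I ideal_I'] .

lemma psi_prime: "p \<in> I' \<Longrightarrow> is_prime_elem p \<Longrightarrow> is_prime_elem (\<psi> p)"
  using iso_prime[OF psi_iso ideal_I' ideal_I] .

lemma prime_I_notin_I': "is_prime_elem p \<Longrightarrow> p \<in> I \<Longrightarrow> p \<notin> I'"
  using disjoint unfolding is_prime_elem_def by (metis IntI alg_le_refl singletonD)

lemma phi_prime_not_le_I: "is_prime_elem p \<Longrightarrow> p \<in> I \<Longrightarrow> b \<in> I \<Longrightarrow> \<not> alg_le (\<phi> p) b"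
  using prime_I_notin_I'[OF phi_prime] phi_in downward_I by blast

lemma not_le_I': "p \<notin> I' \<Longrightarrow> b \<in> I' \<Longrightarrow> \<not> alg_le p b"
  using downward_I' by blast

lemma psi_prime_notin_I': "p \<in> I' \<Longrightarrow> is_prime_elem p \<Longrightarrow> \<psi> p \<notin> I'"
  using prime_I_notin_I'[OF psi_prime psi_in] .

lemma pi_hom: "monoid_hom \<pi>"
  using pushout unfolding crowned_pushout_def by blast

lemma pi_eq_iff: "\<pi> x = \<pi> y \<longleftrightarrow> (x, y) \<in> crown_cong I \<phi>"
  using pushout unfolding crowned_pushout_def by blast

lemma pi_surjE:
  obtains x where "\<alpha> = \<pi> x"
  using pushout unfolding crowned_pushout_def by (metis surj_def)

lemma pi_add [simp]: "\<pi> (x + y) = \<pi> x + \<pi> y"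
  and pi_zero [simp]: "\<pi> 0 = 0"
  using pi_hom unfolding monoid_hom_def by auto

lemma pi_phi: "x \<in> I \<Longrightarrow> \<pi> (\<phi> x) = \<pi> x"
  using pi_eq_iff crown_cong.gen crown_cong.sym by metis

lemma pi_psi: "y \<in> I' \<Longrightarrow> \<pi> (\<psi> y) = \<pi> y"
  using pi_phi[OF psi_in] phi_psi by simp

text \<open>For a prime \<open>p \<notin> I'\<close>, \<open>\<pi> p \<le> \<pi> a\<close> holds exactly when \<open>p\<close> or (for \<open>p \<in> I\<close>) its
  copy \<open>\<phi> p\<close> lies below \<open>a\<close>.\<close>
definition reaches :: "'a \<Rightarrow> 'a \<Rightarrow> bool" where
  "reaches p a \<longleftrightarrow> alg_le p a \<or> (p \<in> I \<and> alg_le (\<phi> p) a)"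

lemma reaches_add:
  assumes "is_prime_elem p"
  shows "reaches p (a + b) \<longleftrightarrow> reaches p a \<or> reaches p b"
proof -
  have prime_add: "alg_le q (a + b) \<longleftrightarrow> alg_le q a \<or> alg_le q b" if "is_prime_elem q" for q
    using that alg_le_trans alg_le_add_right alg_le_add_left unfolding is_prime_elem_def by blast
  show ?thesis unfolding reaches_def using prime_add[OF assms] prime_add[OF phi_prime] assms by blast
qed

lemma reaches_phi:
  assumes "is_prime_elem p" and "p \<notin> I'" and x: "x \<in> I"
  shows "reaches p x \<longleftrightarrow> reaches p (\<phi> x)"
proof -
  have "reaches p x \<longleftrightarrow> alg_le p x"
    unfolding reaches_def using phi_prime_not_le_I[OF assms(1) _ x] by blast
  moreover have "reaches p (\<phi> x) \<longleftrightarrow> p \<in> I \<and> alg_le p x"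
    unfolding reaches_def using not_le_I'[OF assms(2) phi_in[OF x]] phi_le_iff[OF _ x] by blast
  ultimately show ?thesis using downward_I x by blast
qed

lemma reaches_cong:
  assumes p: "is_prime_elem p" "p \<notin> I'" and ab: "(a, b) \<in> crown_cong I \<phi>"
  shows "reaches p a \<longleftrightarrow> reaches p b"
  by (rule crown_cong_invariant[OF _ _ ab]) (use reaches_phi[OF p] reaches_add[OF p(1)] in auto)

lemma pi_le_iff:
  assumes p: "is_prime_elem p" "p \<notin> I'"
  shows "alg_le (\<pi> p) (\<pi> a) \<longleftrightarrow> reaches p a"
proof
  assume "alg_le (\<pi> p) (\<pi> a)"
  then obtain \<gamma> where \<gamma>: "\<pi> a = \<pi> p + \<gamma>" unfolding alg_le_def by blast
  obtain c where "\<gamma> = \<pi> c" using pi_surjE .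
  then have "(a, p + c) \<in> crown_cong I \<phi>" using \<gamma> pi_eq_iff[of a "p + c"] by simp
  moreover have "reaches p (p + c)" unfolding reaches_def by simp
  ultimately show "reaches p a" using reaches_cong[OF p] by blast
next
  assume "reaches p a"
  then show "alg_le (\<pi> p) (\<pi> a)"
    unfolding reaches_def using alg_le_hom[OF pi_hom] pi_phi by metis
qed

lemma pi_prime:
  assumes p: "is_prime_elem p" "p \<notin> I'"
  shows "is_prime_elem (\<pi> p)"
  unfolding is_prime_elem_def
proof (intro conjI allI impI)
  have "\<not> reaches p 0"
    unfolding reaches_def using p(1) phi_prime unfolding is_prime_elem_def by blast
  then show "\<not> alg_le (\<pi> p) 0" using pi_le_iff[OF p, of 0] by simp
next
  fix \<alpha> \<beta> assume le: "alg_le (\<pi> p) (\<alpha> + \<beta>)"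
  obtain a b where ab: "\<alpha> = \<pi> a" "\<beta> = \<pi> b" using pi_surjE by metis
  have "reaches p (a + b)" using le ab pi_le_iff[OF p, of "a + b"] by simp
  then show "alg_le (\<pi> p) \<alpha> \<or> alg_le (\<pi> p) \<beta>" using reaches_add[OF p(1)] pi_le_iff[OF p] ab by blast
qed

subsection \<open>Cancellation and antisymmetry of the quotient\<close>

text \<open>A prime \<open>p \<notin> I'\<close> is identified in \<open>Q\<close> with its \<open>partner\<close>, which is \<open>\<phi> p\<close> if
  \<open>p \<in> I\<close> and \<open>p\<close> itself otherwise.  Counting the elements of \<open>{p, partner p}\<close> below an
  element is an invariant of the crown congruence.\<close>
definition partner :: "'a \<Rightarrow> 'a" where
  "partner p = (if p \<in> I then \<phi> p else p)"

lemma partner_prime: "is_prime_elem p \<Longrightarrow> is_prime_elem (partner p)"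
  unfolding partner_def using phi_prime by simp

lemma partner_free: "free_prime p \<Longrightarrow> free_prime (partner p)"
  unfolding partner_def using iso_free[OF iso ideal_I] by simp

lemma pi_partner: "\<pi> (partner p) = \<pi> p"
  unfolding partner_def using pi_phi by simp

lemma partner_antichain:
  assumes "is_prime_elem p" and "p \<notin> I'"
  shows "alg_antichain {p, partner p}"
  unfolding alg_antichain_def partner_def
  using phi_prime_not_le_I[OF assms(1)] not_le_I'[OF assms(2) phi_in] by auto

text \<open>For \<open>x \<in> I\<close> only \<open>p\<close> can lie below \<open>x\<close> and only \<open>\<phi> p\<close> below \<open>\<phi> x\<close>; the counts agree
  because \<open>\<phi>\<close> is an isomorphism \<open>I \<rightarrow> I'\<close>.\<close>
lemma dominates_partner_phi:
  assumes p: "is_prime_elem p" "p \<notin> I'" and x: "x \<in> I"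
  shows "dominates {p, partner p} n x \<longleftrightarrow> dominates {p, partner p} n (\<phi> x)"
proof (cases "p \<in> I")
  case False
  then have S: "{p, partner p} = {p}" unfolding partner_def by simp
  have "\<not> alg_le p x" "\<not> alg_le p (\<phi> x)"
    using False downward_I x not_le_I'[OF p(2) phi_in[OF x]] by blast+
  then show ?thesis unfolding S using dominates_none[of "{p}"] dominates_0 by (metis singletonD)
next
  case True
  have "dominates {p, \<phi> p} n x \<longleftrightarrow> dominates {p} n x"
    using dominates_drop[OF phi_prime_not_le_I[OF p(1) True x], of "{p}"] by (simp add: insert_commute)
  also have "\<dots> \<longleftrightarrow> dominates {\<phi> p} n (\<phi> x)"
  proof
    assume "dominates {p} n x"
    then show "dominates {\<phi> p} n (\<phi> x)"
      using dominates_iso[OF iso ideal_I ideal_I' _ x, where S = "{p}"] True by simp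
  next
    assume "dominates {\<phi> p} n (\<phi> x)"
    then have "dominates (\<psi> ` {\<phi> p}) n (\<psi> (\<phi> x))"
      using dominates_iso[OF psi_iso ideal_I' ideal_I _ phi_in[OF x], where S = "{\<phi> p}"]
        phi_in[OF True] by simp
    then show "dominates {p} n x" using psi_phi True x by simp
  qed
  also have "\<dots> \<longleftrightarrow> dominates {p, \<phi> p} n (\<phi> x)"
    using dominates_drop[OF not_le_I'[OF p(2) phi_in[OF x]], of "{\<phi> p}"] by simp
  finally show ?thesis unfolding partner_def using True by simp
qed

lemma dominates_partner_cong:
  assumes p: "is_prime_elem p" "p \<notin> I'" and ab: "(a, b) \<in> crown_cong I \<phi>"
  shows "dominates {p, partner p} n a \<longleftrightarrow> dominates {p, partner p} n b"
proof -
  have S: "{p, partner p} \<subseteq> primes_of" using p(1) partner_prime by (simp add: primes_of_def)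
  have "(\<lambda>n. dominates {p, partner p} n a) = (\<lambda>n. dominates {p, partner p} n b)"
  proof (rule crown_cong_invariant[OF _ _ ab])
    show "(\<lambda>n. dominates {p, partner p} n x) = (\<lambda>n. dominates {p, partner p} n (\<phi> x))"
      if "x \<in> I" for x
      using dominates_partner_phi[OF p that] by simp
    show "(\<lambda>n. dominates {p, partner p} n (x + z)) = (\<lambda>n. dominates {p, partner p} n (y + z))"
      if "(\<lambda>n. dominates {p, partner p} n x) = (\<lambda>n. dominates {p, partner p} n y)" for x y z
      using that dominates_add[OF S] by (simp add: fun_eq_iff)
  qed
  then show ?thesis by metis
qed

text \<open>For free \<open>p\<close>, \<open>x\<close> dominates arbitrarily many elements of
  \<open>{p, partner p}\<close>, so a prime below \<open>x\<close> lies strictly above \<open>p\<close> or its partner and absorbs it.\<close>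
lemma pi_absorb_prime_outside_I':
  assumes p: "is_prime_elem p" "p \<notin> I'" and h: "\<pi> (x + p + s) = \<pi> x"
  shows "\<pi> (x + p) = \<pi> x"
proof (cases "free_prime p")
  case False
  then have idem: "p + p = p" unfolding free_prime_def by simp
  have "\<pi> (x + p) = \<pi> (x + p + s) + \<pi> p" using h by simp
  also have "\<dots> = \<pi> (x + s + (p + p))" by (simp add: add_ac)
  also have "\<dots> = \<pi> x" using h idem by (simp add: add_ac)
  finally show ?thesis .
next
  case True
  let ?S = "{p, partner p}"
  have S: "?S \<subseteq> primes_of" "alg_antichain ?S" "\<And>s. s \<in> ?S \<Longrightarrow> free_prime s"
    using p partner_prime partner_antichain True partner_free by (auto simp: primes_of_def)
  have cong: "(x + p + s, x) \<in> crown_cong I \<phi>" using h pi_eq_iff by blast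
  have "dominates ?S n x" for n
  proof (induction n)
    case (Suc n)
    have "dominates ?S 1 (p + s)" unfolding dominates_def by (rule exI[of _ "[p]"]) simp
    then have "dominates ?S (n + 1) (x + (p + s))" using dominates_add_intro Suc.IH by blast
    then have "dominates ?S (Suc n) (x + p + s)" by (simp add: add.assoc)
    then show ?case using dominates_partner_cong[OF p cong] by blast
  qed simp
  then obtain r q where r: "is_prime_elem r" "alg_le r x" "q \<in> ?S" "alg_less q r"
    using prime_above_antichain[OF S] by blast
  obtain z where "x = r + z" using r(2) unfolding alg_le_def by blast
  then have "x + q = x" using absorb_below_prime[OF r(4,1)] by (metis add.assoc add.commute)
  moreover have "\<pi> q = \<pi> p" using r(3) pi_partner by auto
  ultimately show ?thesis by (metis pi_add)
qed

lemma pi_absorb_prime: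
  assumes p: "is_prime_elem p" and h: "\<pi> (x + p + s) = \<pi> x"
  shows "\<pi> (x + p) = \<pi> x"
proof (cases "p \<in> I'")
  case False
  then show ?thesis using pi_absorb_prime_outside_I' p h by blast
next
  case True
  then have "\<pi> (x + \<psi> p + s) = \<pi> x" using h pi_psi by simp
  then have "\<pi> (x + \<psi> p) = \<pi> x"
    using pi_absorb_prime_outside_I' psi_prime psi_prime_notin_I' True p by blast
  then show ?thesis using pi_psi[OF True] by simp
qed

text \<open>\<open>Q\<close> is antisymmetric: if \<open>\<pi> x = \<pi> (x + u + v)\<close> then each prime summand of \<open>u\<close>, and
  hence \<open>u\<close> itself, is absorbed by \<open>\<pi> x\<close>.\<close>
lemma quotient_antisym:
  assumes "alg_le (\<alpha>::'b) \<beta>" and "alg_le \<beta> \<alpha>"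
  shows "\<alpha> = \<beta>"
proof -
  obtain \<gamma> \<delta> where g: "\<beta> = \<alpha> + \<gamma>" "\<alpha> = \<beta> + \<delta>" using assms unfolding alg_le_def by blast
  obtain x u v where xuv: "\<alpha> = \<pi> x" "\<gamma> = \<pi> u" "\<delta> = \<pi> v" using pi_surjE by metis
  obtain rs where rs: "set rs \<subseteq> primes_of" "u = sum_list rs" using prime_decomposition .
  have "\<alpha> = \<alpha> + \<gamma> + \<delta>" using g(2) unfolding g(1) .
  then have total: "\<pi> (x + u + v) = \<pi> x" using xuv by simp
  have "\<pi> x + \<pi> r = \<pi> x" if r: "r \<in> set rs" for r
  proof -
    obtain u' where "u = r + u'" using alg_le_sum_list[OF r] rs(2) unfolding alg_le_def by blast
    then have "\<pi> (x + r + (u' + v)) = \<pi> x" using total by (simp add: add_ac)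
    moreover have "is_prime_elem r" using r rs(1) by (auto simp: primes_of_def)
    ultimately show ?thesis using pi_absorb_prime by (metis pi_add)
  qed
  then have "\<pi> x + \<pi> u = \<pi> x" unfolding rs(2)
    by (induction rs) (simp_all add: add.assoc[symmetric])
  then show ?thesis using g(1) xuv(1,2) by simp
qed

subsection \<open>Refinement of the quotient\<close>

text \<open>This is
  where refinement of \<open>P\<close> and \<open>I \<inter> I' = {0}\<close> enter: the middle entries of a \<open>3 \<times> 3\<close>
  refinement lie in \<open>I \<inter> I'\<close>, hence vanish.\<close>
lemma normal_form_trans:
  assumes A: "A \<in> I" "B \<in> I" and A': "A' \<in> I" "B' \<in> I"
    and mid: "w + \<phi> A + B = w' + A' + \<phi> B'"
  shows "\<exists>W A2 B2. A2 \<in> I \<and> B2 \<in> I \<and>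
    w + A + \<phi> B = W + A2 + \<phi> B2 \<and> w' + \<phi> A' + B' = W + \<phi> A2 + B2"
proof -
  from refine33[OF mid] obtain z11 z12 z13 z21 z22 z23 z31 z32 z33 where
    r: "w = z11 + z12 + z13" "\<phi> A = z21 + z22 + z23" "B = z31 + z32 + z33"
      "w' = z11 + z21 + z31" "A' = z12 + z22 + z32" "\<phi> B' = z13 + z23 + z33" by blast
  have row2: "z21 \<in> I'" "z22 \<in> I'" "z23 \<in> I'"
    using phi_in[OF A(1)] unfolding r(2) by (simp_all only: order_ideal_add_iff[OF ideal_I'])
  have row3: "z31 \<in> I" "z32 \<in> I" "z33 \<in> I"
    using A(2) unfolding r(3) by (simp_all only: order_ideal_add_iff[OF ideal_I])
  have col2: "z12 \<in> I" "z22 \<in> I" "z32 \<in> I"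
    using A'(1) unfolding r(5) by (simp_all only: order_ideal_add_iff[OF ideal_I])
  have col3: "z13 \<in> I'" "z23 \<in> I'" "z33 \<in> I'"
    using phi_in[OF A'(2)] unfolding r(6) by (simp_all only: order_ideal_add_iff[OF ideal_I'])
  have "z22 = 0" "z33 = 0" using disjoint row2(2) col2(2) row3(3) col3(3) by blast+
  then have decomp: "A = \<psi> z21 + \<psi> z23" "B' = \<psi> z13 + \<psi> z23"
      "\<phi> B = \<phi> z31 + \<phi> z32" "\<phi> A' = \<phi> z12 + \<phi> z32"
    using r(2,3,5,6) psi_phi[OF A(1)] psi_phi[OF A'(2)] psi_add row2 col3 phi_add row3 col2
    by (metis add_0_right)+
  define W where "W = z11 + \<psi> z23 + \<phi> z32"
  define A2 where "A2 = z12 + \<psi> z21"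
  define B2 where "B2 = \<psi> z13 + z31"
  have in_I: "A2 \<in> I" "B2 \<in> I"
    unfolding A2_def B2_def using col2 row3 psi_in row2 col3 order_ideal_add_iff[OF ideal_I] by simp_all
  have phi_A2: "\<phi> A2 = \<phi> z12 + z21" and phi_B2: "\<phi> B2 = z13 + \<phi> z31"
    unfolding A2_def B2_def using phi_add col2 row3 psi_in row2 col3 phi_psi by simp_all
  have "w + A + \<phi> B = W + A2 + \<phi> B2"
    unfolding phi_B2 W_def A2_def r(1) decomp by (simp only: ac_simps)
  moreover have "w' + \<phi> A' + B' = W + \<phi> A2 + B2"
    unfolding phi_A2 W_def B2_def r(4) decomp by (simp only: ac_simps)
  ultimately show ?thesis using in_I by blast
qed

lemma crown_cong_normal_form:
  "(x, y) \<in> crown_cong I \<phi> \<Longrightarrow> \<exists>w A B. A \<in> I \<and> B \<in> I \<and> x = w + A + \<phi> B \<and> y = w + \<phi> A + B"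
proof (induction rule: crown_cong.induct)
  case (gen x)
  have "x = 0 + x + \<phi> 0" "\<phi> x = 0 + \<phi> x + 0" by simp_all
  then show ?case using gen order_ideal_zero[OF ideal_I] by blast
next
  case (refl x)
  have "x = x + 0 + \<phi> 0" "x = x + \<phi> 0 + 0" by simp_all
  then show ?case using order_ideal_zero[OF ideal_I] by blast
next
  case (sym x y)
  then obtain w A B where "A \<in> I" "B \<in> I" "x = w + A + \<phi> B" "y = w + \<phi> A + B" by blast
  moreover from this have "y = w + B + \<phi> A" "x = w + \<phi> B + A" by (simp_all add: add_ac)
  ultimately show ?case by blast
next
  case (add x y z)
  then obtain w A B where "A \<in> I" "B \<in> I" "x = w + A + \<phi> B" "y = w + \<phi> A + B" by blast
  moreover from this have "x + z = (w + z) + A + \<phi> B" "y + z = (w + z) + \<phi> A + B"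
    by (simp_all add: add_ac)
  ultimately show ?case by blast
next
  case (trans x y z)
  from trans.IH obtain w A B w' A' B' where
    "A \<in> I" "B \<in> I" "x = w + A + \<phi> B" "y = w + \<phi> A + B"
    "A' \<in> I" "B' \<in> I" "y = w' + A' + \<phi> B'" "z = w' + \<phi> A' + B'" by blast
  then show ?case using normal_form_trans by metis
qed

lemma lift_decomposition:
  assumes e: "a + b = s + \<phi> t" and t: "t \<in> I"
  shows "\<exists>a' b'. \<pi> a' = \<pi> a \<and> \<pi> b' = \<pi> b \<and> a' + b' = s + t"
proof -
  from refine[OF e] obtain z11 z12 z21 z22 where
    z: "a = z11 + z12" "b = z21 + z22" "s = z11 + z21" "\<phi> t = z12 + z22" by blast
  have zI': "z12 \<in> I'" "z22 \<in> I'"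
    using phi_in[OF t] unfolding z(4) by (simp_all only: order_ideal_add_iff[OF ideal_I'])
  have "\<psi> z12 + \<psi> z22 = t" using psi_add[OF zI'] z(4) psi_phi[OF t] by metis
  then have "(z11 + \<psi> z12) + (z21 + \<psi> z22) = s + t" using z(3) by (simp add: add_ac)
  moreover have "\<pi> (z11 + \<psi> z12) = \<pi> a" "\<pi> (z21 + \<psi> z22) = \<pi> b"
    using z(1,2) pi_psi zI' by simp_all
  ultimately show ?thesis by blast
qed

text \<open>\<open>Q\<close> is a refinement monoid: the two sides of \<open>\<alpha> + \<beta> = \<gamma> + \<delta>\<close> lift to decompositions of
  one and the same element \<open>w + A + B\<close> of \<open>P\<close>, which are refined in \<open>P\<close>.\<close>
lemma quotient_refinement: "refinement_monoid TYPE('b)"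
  unfolding refinement_monoid_def
proof (intro allI impI)
  fix \<alpha> \<beta> \<gamma> \<delta> :: 'b assume h: "\<alpha> + \<beta> = \<gamma> + \<delta>"
  obtain a b c d where abcd: "\<alpha> = \<pi> a" "\<beta> = \<pi> b" "\<gamma> = \<pi> c" "\<delta> = \<pi> d" using pi_surjE by metis
  then have "(a + b, c + d) \<in> crown_cong I \<phi>" using h pi_eq_iff[of "a + b" "c + d"] by simp
  from crown_cong_normal_form[OF this] obtain w A B where
    nf: "A \<in> I" "B \<in> I" "a + b = w + A + \<phi> B" "c + d = (w + B) + \<phi> A" by (metis add_ac)
  from lift_decomposition[OF nf(3) nf(2)] obtain a' b' where
    ab: "\<pi> a' = \<pi> a" "\<pi> b' = \<pi> b" "a' + b' = w + A + B" by blast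
  from lift_decomposition[OF nf(4) nf(1)] obtain c' d' where
    cd: "\<pi> c' = \<pi> c" "\<pi> d' = \<pi> d" "c' + d' = w + B + A" by blast
  have "a' + b' = c' + d'" using ab(3) cd(3) by (simp add: add_ac)
  from refine[OF this] obtain z11 z12 z21 z22 where
    z: "a' = z11 + z12" "b' = z21 + z22" "c' = z11 + z21" "d' = z12 + z22" by blast
  have "\<alpha> = \<pi> z11 + \<pi> z12 \<and> \<beta> = \<pi> z21 + \<pi> z22 \<and> \<gamma> = \<pi> z11 + \<pi> z21 \<and> \<delta> = \<pi> z12 + \<pi> z22"
    using abcd ab cd z by (metis pi_add)
  then show "\<exists>z11 z12 z21 z22. \<alpha> = z11 + z12 \<and> \<beta> = z21 + z22 \<and> \<gamma> = z11 + z21 \<and> \<delta> = z12 + z22"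
    by blast
qed

subsection \<open>The primes of the quotient\<close>

definition outside_rep :: "'a \<Rightarrow> 'a" where
  "outside_rep r = (if r \<in> I' then \<psi> r else r)"

lemma outside_rep_prime: "is_prime_elem r \<Longrightarrow> outside_rep r \<in> primes_of - I'"
  unfolding outside_rep_def primes_of_def using psi_prime psi_prime_notin_I' by auto

lemma pi_outside_rep: "\<pi> (outside_rep r) = \<pi> r"
  unfolding outside_rep_def using pi_psi by simp

lemma quotient_primely_generated: "primely_generated TYPE('b)"
  unfolding primely_generated_def
proof
  fix \<alpha> :: 'b
  obtain x where x: "\<alpha> = \<pi> x" using pi_surjE .
  obtain rs where rs: "set rs \<subseteq> primes_of" "x = sum_list rs" using prime_decomposition .
  have "\<alpha> = sum_list (map (\<lambda>r. \<pi> (outside_rep r)) rs)"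
    using x rs(2) monoid_hom_sum_list[OF pi_hom] pi_outside_rep by simp
  moreover have "set (map (\<lambda>r. \<pi> (outside_rep r)) rs) \<subseteq> primes_of"
    using rs(1) outside_rep_prime pi_prime by (auto simp: primes_of_def)
  ultimately show "\<exists>xs. set xs \<subseteq> primes_of \<and> \<alpha> = sum_list xs" by blast
qed

lemma reaches_iff_le:
  assumes "is_prime_elem p" and "p \<in> I \<Longrightarrow> q \<in> I"
  shows "reaches p q \<longleftrightarrow> alg_le p q"
  unfolding reaches_def using assms phi_prime_not_le_I by blast

text \<open>If \<open>\<pi> p = \<pi> q\<close> then \<open>p\<close> and \<open>q\<close> reach each other; since \<open>I\<close> is an order-ideal this
  forces \<open>p \<le> q \<le> p\<close>.\<close>
lemma pi_inj_on_primes: "inj_on \<pi> (primes_of - I')"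
proof (rule inj_onI)
  fix p q assume p: "p \<in> primes_of - I'" and q: "q \<in> primes_of - I'" and e: "\<pi> p = \<pi> q"
  have pp: "is_prime_elem p" "p \<notin> I'" and pq: "is_prime_elem q" "q \<notin> I'"
    using p q unfolding primes_of_def by auto
  have pq_reach: "reaches p q" and qp_reach: "reaches q p"
    using pi_le_iff[OF pp, of q] pi_le_iff[OF pq, of p] e by simp_all
  show "p = q"
  proof (cases "p \<in> I \<longleftrightarrow> q \<in> I")
    case True
    then show ?thesis using pq_reach qp_reach reaches_iff_le pp(1) pq(1) alg_antisym by metis
  next
    case False
    then show ?thesis using pq_reach qp_reach reaches_iff_le pp(1) pq(1) downward_I by metis
  qed
qed

text \<open>A prime of \<open>Q\<close> lies below the image of a prime summand of a preimage, and by
  antisymmetry of \<open>Q\<close> equals it.\<close>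
lemma pi_image_primes: "\<pi> ` (primes_of - I') = (primes_of :: 'b set)"
proof
  show "\<pi> ` (primes_of - I') \<subseteq> primes_of" using pi_prime unfolding primes_of_def by auto
next
  show "primes_of \<subseteq> \<pi> ` (primes_of - I')"
  proof
    fix \<rho> :: 'b assume "\<rho> \<in> primes_of"
    then have \<rho>: "is_prime_elem \<rho>" unfolding primes_of_def by simp
    obtain x where x: "\<rho> = \<pi> x" using pi_surjE .
    obtain rs where rs: "set rs \<subseteq> primes_of" "x = sum_list rs" using prime_decomposition .
    have sum: "\<rho> = sum_list (map \<pi> rs)" using x rs(2) monoid_hom_sum_list[OF pi_hom] by simp
    then obtain r where r: "r \<in> set rs" "alg_le \<rho> (\<pi> r)"
      using prime_le_sum_list[OF \<rho>, of "map \<pi> rs"] by auto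
    have "alg_le (\<pi> r) \<rho>" using sum alg_le_sum_list[of "\<pi> r" "map \<pi> rs"] r(1) by simp
    then have "\<rho> = \<pi> (outside_rep r)" using quotient_antisym r(2) pi_outside_rep by simp
    moreover have "outside_rep r \<in> primes_of - I'"
      using outside_rep_prime r(1) rs(1) by (auto simp: primes_of_def)
    ultimately show "\<rho> \<in> \<pi> ` (primes_of - I')" by blast
  qed
qed

definition crown_order :: "('a \<times> 'a) set" where
  "crown_order = {(p, q). p \<in> primes_of - I' \<and> q \<in> primes_of - I' \<and> alg_le p q}
    \<union> {(p, q). p \<in> primes_of \<inter> I \<and> q \<in> primes_of - (I \<union> I') \<and> alg_less (\<phi> p) q}"

lemma pi_le_primes_iff:
  assumes p: "p \<in> primes_of - I'" and q: "q \<in> primes_of - I'"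
  shows "alg_le (\<pi> p) (\<pi> q) \<longleftrightarrow> (p, q) \<in> crown_order\<^sup>*"
proof
  have pp: "is_prime_elem p" "p \<notin> I'" using p unfolding primes_of_def by auto
  assume "alg_le (\<pi> p) (\<pi> q)"
  then have "reaches p q" using pi_le_iff[OF pp] by simp
  then have "(p, q) \<in> crown_order"
  proof (cases "alg_le p q")
    case True
    then show ?thesis using p q unfolding crown_order_def by blast
  next
    case False
    with \<open>reaches p q\<close> have pI: "p \<in> I" and le: "alg_le (\<phi> p) q" unfolding reaches_def by blast+
    have "\<phi> p \<noteq> q" using phi_in[OF pI] q by blast
    moreover have "q \<notin> I" using phi_prime_not_le_I[OF pp(1) pI] le by blast
    ultimately show ?thesis using p q pI le unfolding crown_order_def alg_less_def by blast
  qed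
  then show "(p, q) \<in> crown_order\<^sup>*" by blast
next
  have step: "alg_le (\<pi> a) (\<pi> b)" if "(a, b) \<in> crown_order" for a b
    using that alg_le_hom[OF pi_hom] pi_phi unfolding crown_order_def alg_less_def by fastforce
  assume "(p, q) \<in> crown_order\<^sup>*"
  then show "alg_le (\<pi> p) (\<pi> q)"
    by (induction rule: rtrancl_induct) (auto intro: alg_le_trans step)
qed

text \<open>Freeness is preserved and reflected: a relation \<open>\<pi> p + \<pi> p = \<pi> p\<close> would make \<open>p\<close>
  dominate two elements of \<open>{p, partner p}\<close>, which the counting invariant forbids.\<close>
lemma pi_free_iff:
  assumes p: "p \<in> primes_of - I'"
  shows "free_prime (\<pi> p) \<longleftrightarrow> free_prime p"
proof
  assume "free_prime (\<pi> p)"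
  then show "free_prime p" unfolding free_prime_def by (metis pi_add)
next
  assume free: "free_prime p"
  have pp: "is_prime_elem p" "p \<notin> I'" using p unfolding primes_of_def by auto
  show "free_prime (\<pi> p)"
  proof (rule ccontr)
    assume "\<not> free_prime (\<pi> p)"
    then have "(p + p, p) \<in> crown_cong I \<phi>"
      using pi_eq_iff[of "p + p" p] unfolding free_prime_def by simp
    moreover have "dominates {p, partner p} 2 (p + p)"
      unfolding dominates_def by (rule exI[of _ "[p, p]"]) simp
    ultimately have "dominates {p, partner p} 2 p" using dominates_partner_cong[OF pp] by blast
    then have "2 \<le> (1::nat)" using dominates_free_le_one[OF partner_antichain[OF pp] _ free] by blast
    then show False by simp
  qed
qed

end

theorem mainTheorem10:
  fixes I I' :: "'a::comm_monoid_add set"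
    and \<phi> :: "'a \<Rightarrow> 'a"
    and \<pi> :: "'a \<Rightarrow> 'b::comm_monoid_add"
  assumes "primitive_monoid TYPE('a)"
    and "order_ideal I" and "order_ideal I'"
    and "I \<inter> I' = {0}"
    and "monoid_iso_on \<phi> I I'"
    and "crowned_pushout I \<phi> \<pi>"
  shows "primitive_monoid TYPE('b)
    \<and> bij_betw \<pi> (primes_of - I') (primes_of :: 'b set)
    \<and> (\<forall>p \<in> primes_of - I'. \<forall>q \<in> primes_of - I'.
          alg_le (\<pi> p) (\<pi> q) \<longleftrightarrow>
          (p, q) \<in> ({(p, q). p \<in> primes_of - I' \<and> q \<in> primes_of - I' \<and> alg_le p q}
                   \<union> {(p, q). p \<in> primes_of \<inter> I \<and> q \<in> primes_of - (I \<union> I') \<and> alg_less (\<phi> p) q})\<^sup>*)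
    \<and> (\<forall>p \<in> primes_of - I'. free_prime (\<pi> p) \<longleftrightarrow> free_prime p)"
proof -
  interpret crown I I' \<phi> \<pi>
    using assms unfolding crown_def primitive_def refinement_def primitive_axioms_def
      crown_axioms_def primitive_monoid_def by blast
  have "primitive_monoid TYPE('b)"
    unfolding primitive_monoid_def antisymmetric_monoid_def
    using quotient_antisym quotient_primely_generated quotient_refinement by blast
  moreover have "bij_betw \<pi> (primes_of - I') (primes_of :: 'b set)"
    unfolding bij_betw_def using pi_inj_on_primes pi_image_primes by blast
  ultimately show ?thesis
    using pi_le_primes_iff pi_free_iff unfolding crown_order_def by blast
qed

end
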